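(* Let $(H,k,\chi)$ be an instance of Precoloring Extension with $H=(V,F)$, $V=\{1,\dots,n\}$, $H$ having at least one edge. Construct a $P_n\,|\,\mathrm{conc}\,|\,C_{\max}$ instance as follows: jobs $1,\dots,n$ with $p_j=1$ and conflict graph initially $G=H$; jobs $a,b$ with $p_a=p_b=1$ and jobs $a',b'$ with $p_{a'}=p_{b'}=k-1$, with conflict edges $\{a,a'\},\{b,b'\},\{a,b\}$; for each $j\in V_0$ with $\chi(j)\in\{2,\dots,k-1\}$, jobs $j(1),j(2)$ with $p_{j(1)}=\chi(j)-1$, $p_{j(2)}=k-\chi(j)$ and conflict edges $\{j,j(1)\},\{j,j(2)\},\{j(1),j(2)\},\{a,j\},\{b,j\},\{a,j(2)\},\{b,j(1)\}$; for each $j\in V_0$ with $\chi(j)=1$, a job $j(2)$ with $p_{j(2)}=k-1$ and conflict edges $\{j,j(2)\},\{b,j\},\{a,j(2)\}$; for each $j\in V_0$ with $\chi(j)=k$, a job $j(1)$ with $p_{j(1)}=k-1$ and conflict edges $\{j,j(1)\},\{a,j\},\{b,j(1)\}$. If $(H,k,\chi)$ has a solution $\chi':\{1,\dots,n\}\to\{1,\dots,k\}$, then the constructed instance has a feasible schedule $C$ with $C_{\max}\le k$.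
   Context: Precoloring Extension: given a graph $H=(V,F)$, an integer $k$, and a proper coloring $\chi:V_0\to\{1,\dots,k\}$ of $H[V_0]$ for some $V_0\subseteq V$, a solution is a proper coloring $\chi':V\to\{1,\dots,k\}$ of $H$ with $\chi'(v)=\chi(v)$ for all $v\in V_0$. In $P_n\,|\,\mathrm{conc}\,|\,C_{\max}$, each job $j$ has integer processing time $p_j\ge1$ and release time $0$, and there is a conflict graph $G$; a schedule $C$ assigning each job a completion time $C_j\in\mathbb{N}$ is feasible if $C_j-p_j\ge0$ for all $j$ and $[C_i-p_i,C_i)\cap[C_j-p_j,C_j)=\emptyset$ for all edges $\{i,j\}$ of $G$; $C_{\max}=\max_j C_j$. *)

theory Defs
  imports Main
begin

definition simple_graph_on :: "nat \<Rightarrow> nat set set \<Rightarrow> bool" where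
  "simple_graph_on n F \<longleftrightarrow> (\<forall>e\<in>F. \<exists>u v. e = {u, v} \<and> u \<noteq> v \<and> u \<in> {1..n} \<and> v \<in> {1..n})"

definition pce_instance :: "nat \<Rightarrow> nat set set \<Rightarrow> nat \<Rightarrow> nat set \<Rightarrow> (nat \<Rightarrow> nat) \<Rightarrow> bool" where
  "pce_instance n F k V0 chi \<longleftrightarrow> simple_graph_on n F \<and> V0 \<subseteq> {1..n} \<and>
     (\<forall>v\<in>V0. chi v \<in> {1..k}) \<and>
     (\<forall>u v. {u, v} \<in> F \<longrightarrow> u \<in> V0 \<longrightarrow> v \<in> V0 \<longrightarrow> chi u \<noteq> chi v)"

definition pce_solution :: "nat \<Rightarrow> nat set set \<Rightarrow> nat \<Rightarrow> nat set \<Rightarrow> (nat \<Rightarrow> nat) \<Rightarrow> (nat \<Rightarrow> nat) \<Rightarrow> bool" where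
  "pce_solution n F k V0 chi chi' \<longleftrightarrow>
     (\<forall>v\<in>{1..n}. chi' v \<in> {1..k}) \<and>
     (\<forall>u v. {u, v} \<in> F \<longrightarrow> chi' u \<noteq> chi' v) \<and>
     (\<forall>v\<in>V0. chi' v = chi v)"

datatype job = Orig nat | JA | JB | JA' | JB' | J1 nat | J2 nat

definition mid_col :: "nat \<Rightarrow> nat set \<Rightarrow> (nat \<Rightarrow> nat) \<Rightarrow> nat set" where
  "mid_col k V0 chi = {j\<in>V0. 2 \<le> chi j \<and> chi j \<le> k - 1}"

definition one_col :: "nat set \<Rightarrow> (nat \<Rightarrow> nat) \<Rightarrow> nat set" where
  "one_col V0 chi = {j\<in>V0. chi j = 1}"

definition top_col :: "nat \<Rightarrow> nat set \<Rightarrow> (nat \<Rightarrow> nat) \<Rightarrow> nat set" where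
  "top_col k V0 chi = {j\<in>V0. chi j = k}"

definition red_jobs :: "nat \<Rightarrow> nat \<Rightarrow> nat set \<Rightarrow> (nat \<Rightarrow> nat) \<Rightarrow> job set" where
  "red_jobs n k V0 chi =
     Orig ` {1..n} \<union> {JA, JB, JA', JB'}
     \<union> J1 ` mid_col k V0 chi \<union> J2 ` mid_col k V0 chi
     \<union> J2 ` one_col V0 chi \<union> J1 ` top_col k V0 chi"

definition red_proc :: "nat \<Rightarrow> (nat \<Rightarrow> nat) \<Rightarrow> job \<Rightarrow> nat" where
  "red_proc k chi x = (case x of
      Orig j \<Rightarrow> 1 | JA \<Rightarrow> 1 | JB \<Rightarrow> 1 | JA' \<Rightarrow> k - 1 | JB' \<Rightarrow> k - 1
    | J1 j \<Rightarrow> (if chi j = k then k - 1 else chi j - 1)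
    | J2 j \<Rightarrow> (if chi j = 1 then k - 1 else k - chi j))"

definition red_conf :: "nat set set \<Rightarrow> nat \<Rightarrow> nat set \<Rightarrow> (nat \<Rightarrow> nat) \<Rightarrow> job set set" where
  "red_conf F k V0 chi =
     {{Orig u, Orig v} | u v. {u, v} \<in> F}
     \<union> {{JA, JA'}, {JB, JB'}, {JA, JB}}
     \<union> (\<Union>j\<in>mid_col k V0 chi. {{Orig j, J1 j}, {Orig j, J2 j}, {J1 j, J2 j},
                                 {JA, Orig j}, {JB, Orig j}, {JA, J2 j}, {JB, J1 j}})
     \<union> (\<Union>j\<in>one_col V0 chi. {{Orig j, J2 j}, {JB, Orig j}, {JA, J2 j}})
     \<union> (\<Union>j\<in>top_col k V0 chi. {{Orig j, J1 j}, {JA, Orig j}, {JB, J1 j}})"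

definition feasible_schedule :: "'j set \<Rightarrow> ('j \<Rightarrow> nat) \<Rightarrow> 'j set set \<Rightarrow> ('j \<Rightarrow> nat) \<Rightarrow> bool" where
  "feasible_schedule J p E C \<longleftrightarrow>
     (\<forall>j\<in>J. p j \<le> C j) \<and>
     (\<forall>i j. {i, j} \<in> E \<longrightarrow> {C i - p i..<C i} \<inter> {C j - p j..<C j} = {})"

definition makespan :: "'j set \<Rightarrow> ('j \<Rightarrow> nat) \<Rightarrow> nat" where
  "makespan J C = Max (C ` J)"

end

theory Submission
  imports Defs
begin

text \<open>Read the colouring chi' as a timetable on [0, k): vertex job j occupies the unit slot
  [chi' j - 1, chi' j), so adjacent vertices get disjoint slots, and a precoloured j keeps its
  slot chi j. All other jobs are packed against the ends of [0, k): a, b' and j(1) start at 0,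
  while b, a' and j(2) finish at k. Thus a = [0, 1) and b = [k - 1, k) avoid a' = [1, k),
  b' = [0, k - 1) and each other, and the gadget jobs j(1) = [0, chi j - 1), j(2) = [chi j, k)
  flank the slot of j; a conflicts with j only if chi j > 1, and b only if chi j < k. Since H has an edge, k \<ge> 2, so all these intervals
  are well formed.\<close>

definition busy_interval :: "('j \<Rightarrow> nat) \<Rightarrow> ('j \<Rightarrow> nat) \<Rightarrow> 'j \<Rightarrow> nat set" where
  "busy_interval p C j = {C j - p j..<C j}"

lemma feasible_scheduleI:
  assumes "\<And>j. j \<in> J \<Longrightarrow> p j \<le> C j"
    and "\<And>i j. {i, j} \<in> E \<Longrightarrow> busy_interval p C i \<inter> busy_interval p C j = {}"
  shows "feasible_schedule J p E C"
  using assms unfolding feasible_schedule_def busy_interval_def by blast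

lemma makespan_le:
  assumes "finite J" "J \<noteq> {}" "\<And>j. j \<in> J \<Longrightarrow> C j \<le> T"
  shows "makespan J C \<le> T"
  using assms unfolding makespan_def by simp

lemma simple_graph_on_edgeD:
  assumes "simple_graph_on n F" "{u, v} \<in> F"
  shows "u \<noteq> v" "u \<in> {1..n}" "v \<in> {1..n}"
  using assms unfolding simple_graph_on_def by (metis doubleton_eq_iff)+

lemma pce_solution_colours_ge_2:
  assumes "simple_graph_on n F" "F \<noteq> {}" "pce_solution n F k V0 chi chi'"
  shows "2 \<le> k"
proof -
  obtain e where "e \<in> F"
    using assms(2) by blast
  moreover obtain u v where "e = {u, v}"
    using assms(1) \<open>e \<in> F\<close> unfolding simple_graph_on_def by blast
  ultimately have uv: "{u, v} \<in> F"
    by simp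
  have "u \<in> {1..n}" "v \<in> {1..n}"
    using simple_graph_on_edgeD[OF assms(1) uv] by simp_all
  then have "chi' u \<in> {1..k}" "chi' v \<in> {1..k}" "chi' u \<noteq> chi' v"
    using assms(3) uv unfolding pce_solution_def by simp_all
  then show ?thesis by auto
qed

lemma red_conf_cases:
  assumes "{x, y} \<in> red_conf F k V0 chi"
  obtains (graph) u v where "{x, y} = {Orig u, Orig v}" "{u, v} \<in> F"
  | (core) "{x, y} \<in> {{JA, JA'}, {JB, JB'}, {JA, JB}}"
  | (mid) j where "j \<in> mid_col k V0 chi"
      "{x, y} \<in> {{Orig j, J1 j}, {Orig j, J2 j}, {J1 j, J2 j},
                 {JA, Orig j}, {JB, Orig j}, {JA, J2 j}, {JB, J1 j}}"
  | (one) j where "j \<in> one_col V0 chi" "{x, y} \<in> {{Orig j, J2 j}, {JB, Orig j}, {JA, J2 j}}"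
  | (top) j where "j \<in> top_col k V0 chi" "{x, y} \<in> {{Orig j, J1 j}, {JA, Orig j}, {JB, J1 j}}"
  using assms unfolding red_conf_def Un_iff UN_iff mem_Collect_eq by metis

lemma finite_red_jobs:
  assumes "finite V0"
  shows "finite (red_jobs n k V0 chi)"
  using assms unfolding red_jobs_def mid_col_def one_col_def top_col_def by auto

definition red_schedule :: "nat \<Rightarrow> (nat \<Rightarrow> nat) \<Rightarrow> (nat \<Rightarrow> nat) \<Rightarrow> job \<Rightarrow> nat" where
  "red_schedule k chi chi' x = (case x of
      Orig j \<Rightarrow> chi' j | JA \<Rightarrow> 1 | JB \<Rightarrow> k | JA' \<Rightarrow> k | JB' \<Rightarrow> k - 1
    | J1 j \<Rightarrow> red_proc k chi (J1 j) | J2 j \<Rightarrow> k)"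

lemma busy_interval_red_schedule:
  assumes "1 \<le> k"
  shows "busy_interval (red_proc k chi) (red_schedule k chi chi') (Orig j) = {chi' j - 1..<chi' j}"
    and "busy_interval (red_proc k chi) (red_schedule k chi chi') JA = {0..<1}"
    and "busy_interval (red_proc k chi) (red_schedule k chi chi') JB = {k - 1..<k}"
    and "busy_interval (red_proc k chi) (red_schedule k chi chi') JA' = {1..<k}"
    and "busy_interval (red_proc k chi) (red_schedule k chi chi') JB' = {0..<k - 1}"
    and "busy_interval (red_proc k chi) (red_schedule k chi chi') (J1 j) = {0..<red_proc k chi (J1 j)}"
    and "chi j \<le> k \<Longrightarrow> busy_interval (red_proc k chi) (red_schedule k chi chi') (J2 j)
           = {k - red_proc k chi (J2 j)..<k}"
  using assms unfolding busy_interval_def red_schedule_def by (auto simp: red_proc_def)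

lemma red_schedule_conflicts_disjoint:
  assumes simple: "simple_graph_on n F" and sol: "pce_solution n F k V0 chi chi'"
    and k: "2 \<le> k" and edge: "{x, y} \<in> red_conf F k V0 chi"
  shows "busy_interval (red_proc k chi) (red_schedule k chi chi') x
       \<inter> busy_interval (red_proc k chi) (red_schedule k chi chi') y = {}"
proof -
  let ?run = "busy_interval (red_proc k chi) (red_schedule k chi chi')"
  have chi'_range: "\<forall>v\<in>{1..n}. chi' v \<in> {1..k}"
    and proper: "\<forall>u v. {u, v} \<in> F \<longrightarrow> chi' u \<noteq> chi' v"
    and extends: "\<forall>v\<in>V0. chi' v = chi v"
    using sol unfolding pce_solution_def by blast+
  have "1 \<le> k"
    using k by simp
  note busy = busy_interval_red_schedule[OF this, where chi' = chi']
  from edge show ?thesis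
  proof (cases rule: red_conf_cases)
    case (graph u v)
    then have "chi' u \<noteq> chi' v" "chi' u \<in> {1..k}" "chi' v \<in> {1..k}"
      using proper chi'_range simple_graph_on_edgeD[OF simple] by blast+
    then show ?thesis
      using graph(1) by (auto simp: busy doubleton_eq_iff)
  next
    case core
    then show ?thesis
      using k by (auto simp: busy doubleton_eq_iff)
  next
    case (mid j)
    then have "2 \<le> chi j" "chi j < k" "chi' j = chi j"
      using extends unfolding mid_col_def by auto
    then have "?run (Orig j) = {chi j - 1..<chi j}" "?run (J1 j) = {0..<chi j - 1}"
      "?run (J2 j) = {chi j..<k}"
      by (simp_all add: busy red_proc_def)
    then show ?thesis
      using mid(2) \<open>2 \<le> chi j\<close> \<open>chi j < k\<close> by (auto simp: busy doubleton_eq_iff)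
  next
    case (one j)
    then have "chi j = 1" "chi' j = 1"
      using extends unfolding one_col_def by auto
    then have "?run (Orig j) = {0..<1}" "?run (J2 j) = {1..<k}"
      using k by (simp_all add: busy red_proc_def)
    then show ?thesis
      using one(2) k by (auto simp: busy doubleton_eq_iff)
  next
    case (top j)
    then have "chi j = k" "chi' j = k"
      using extends unfolding top_col_def by auto
    then have "?run (Orig j) = {k - 1..<k}" "?run (J1 j) = {0..<k - 1}"
      by (simp_all add: busy red_proc_def)
    then show ?thesis
      using top(2) k by (auto simp: busy doubleton_eq_iff)
  qed
qed

lemma red_schedule_bounds:
  assumes "pce_solution n F k V0 chi chi'" "1 \<le> k" "x \<in> red_jobs n k V0 chi"
  shows "red_proc k chi x \<le> red_schedule k chi chi' x" "red_schedule k chi chi' x \<le> k"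
  using assms unfolding red_jobs_def pce_solution_def mid_col_def top_col_def
  by (auto simp: red_proc_def red_schedule_def)

theorem lemma9:
  fixes n k :: nat and F :: "nat set set" and V0 :: "nat set" and chi chi' :: "nat \<Rightarrow> nat"
  assumes "pce_instance n F k V0 chi"
    and "F \<noteq> {}"
    and "pce_solution n F k V0 chi chi'"
  shows "\<exists>C. feasible_schedule (red_jobs n k V0 chi) (red_proc k chi) (red_conf F k V0 chi) C
             \<and> makespan (red_jobs n k V0 chi) C \<le> k"
proof -
  have simple: "simple_graph_on n F" and "finite V0"
    using assms(1) finite_subset unfolding pce_instance_def by blast+
  have k: "2 \<le> k"
    using pce_solution_colours_ge_2[OF simple assms(2,3)] .
  then have bounds: "red_proc k chi x \<le> red_schedule k chi chi' x" "red_schedule k chi chi' x \<le> k"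
    if "x \<in> red_jobs n k V0 chi" for x
    using red_schedule_bounds[OF assms(3) _ that] by simp_all
  have "feasible_schedule (red_jobs n k V0 chi) (red_proc k chi) (red_conf F k V0 chi)
      (red_schedule k chi chi')"
    by (rule feasible_scheduleI) (simp_all add: bounds red_schedule_conflicts_disjoint[OF simple assms(3) k])
  moreover have "makespan (red_jobs n k V0 chi) (red_schedule k chi chi') \<le> k"
    using bounds finite_red_jobs[OF \<open>finite V0\<close>] by (intro makespan_le) (auto simp: red_jobs_def)
  ultimately show ?thesis
    by blast
qed

end
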